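(* Let $\mathcal{I}$ be an interval hypergraph on $[n]$ closed under intersection, let $A_1,\dots,A_q$ be acyclic orientations of $\mathcal{I}$, and let $I\in\mathcal{I}$. Then, with the join taken in $P_{\mathcal{I}}$, \[ \Big(\bigvee_{p\in[q]}A_p\Big)(I)=\min\Big(I\setminus\bigcup_{p\in[q]}\ \bigcup_{J\in\mathcal{I},\ A_p(J)\in I}[\min(J),A_p(J)[\Big). \]
   Context: An interval hypergraph $\mathcal{I}$ on $[n]$ is a collection of intervals of $[n]$ containing all singletons; it is closed under intersection if $I,J\in\mathcal{I}$, $I\cap J\ne\varnothing$ imply $I\cap J\in\mathcal{I}$ (in which case $P_{\mathcal{I}}$ is a lattice). An orientation is a map $O:\mathcal{I}\to[n]$ with $O(I)\in I$; it is acyclic if there are no $H_1,\dots,H_k$, $k\ge2$, with $O(H_{i+1})\in H_i\setminus\{O(H_i)\}$ for $i\in[k-1]$ and $O(H_1)\in H_k\setminus\{O(H_k)\}$. Orientations $O\ne O'$ are related by an increasing flip (from $O$ to $O'$) if there exist $1\le i<j\le n$ such that for all $H$: if $O(H)\ne O'(H)$ then $O(H)=i$, $O'(H)=j$; and if $\{i,j\}\subseteq H$ then $O(H)=i\iff O'(H)=j$. $P_{\mathcal{I}}$ is the transitive closure of the increasing flip relation on acyclic orientations. $[a,b[=\{a,\dots,b-1\}$. *)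

theory Defs
  imports Main
begin

definition interval_hypergraph :: "nat \<Rightarrow> nat set set \<Rightarrow> bool" where
  "interval_hypergraph n \<I> \<longleftrightarrow>
     (\<forall>H\<in>\<I>. \<exists>a b. 1 \<le> a \<and> a \<le> b \<and> b \<le> n \<and> H = {a..b}) \<and>
     (\<forall>i\<in>{1..n}. {i} \<in> \<I>)"

definition closed_under_intersection :: "nat set set \<Rightarrow> bool" where
  "closed_under_intersection \<I> \<longleftrightarrow>
     (\<forall>I\<in>\<I>. \<forall>J\<in>\<I>. I \<inter> J \<noteq> {} \<longrightarrow> I \<inter> J \<in> \<I>)"

(* an orientation is a map Or : I -> [n] with Or(H) in H; represented as a total
   function that is extensional (value 0, outside [n]) off the hypergraph *)
definition orientation :: "nat set set \<Rightarrow> (nat set \<Rightarrow> nat) \<Rightarrow> bool" where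
  "orientation \<I> Or \<longleftrightarrow> (\<forall>H\<in>\<I>. Or H \<in> H) \<and> (\<forall>H. H \<notin> \<I> \<longrightarrow> Or H = 0)"

definition acyclic_orientation :: "nat set set \<Rightarrow> (nat set \<Rightarrow> nat) \<Rightarrow> bool" where
  "acyclic_orientation \<I> Or \<longleftrightarrow> orientation \<I> Or \<and>
     \<not> (\<exists>Hs. length Hs \<ge> 2 \<and> set Hs \<subseteq> \<I> \<and>
          (\<forall>i. Suc i < length Hs \<longrightarrow> Or (Hs ! Suc i) \<in> Hs ! i - {Or (Hs ! i)}) \<and>
          Or (Hs ! 0) \<in> last Hs - {Or (last Hs)})"

definition increasing_flip :: "nat \<Rightarrow> nat set set \<Rightarrow> (nat set \<Rightarrow> nat) \<Rightarrow> (nat set \<Rightarrow> nat) \<Rightarrow> bool" where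
  "increasing_flip n \<I> Or Q \<longleftrightarrow> Or \<noteq> Q \<and>
     (\<exists>i j. 1 \<le> i \<and> i < j \<and> j \<le> n \<and>
        (\<forall>H\<in>\<I>. (Or H \<noteq> Q H \<longrightarrow> Or H = i \<and> Q H = j) \<and>
                 ({i, j} \<subseteq> H \<longrightarrow> (Or H = i \<longleftrightarrow> Q H = j))))"

definition acyc_orients :: "nat set set \<Rightarrow> (nat set \<Rightarrow> nat) set" where
  "acyc_orients \<I> = {Or. acyclic_orientation \<I> Or}"

definition flip_rel :: "nat \<Rightarrow> nat set set \<Rightarrow> ((nat set \<Rightarrow> nat) \<times> (nat set \<Rightarrow> nat)) set" where
  "flip_rel n \<I> = {(Or, Q). Or \<in> acyc_orients \<I> \<and> Q \<in> acyc_orients \<I> \<and> increasing_flip n \<I> Or Q}"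

definition P_le :: "nat \<Rightarrow> nat set set \<Rightarrow> (nat set \<Rightarrow> nat) \<Rightarrow> (nat set \<Rightarrow> nat) \<Rightarrow> bool" where
  "P_le n \<I> Or Q \<longleftrightarrow> Or \<in> acyc_orients \<I> \<and> Q \<in> acyc_orients \<I> \<and> (Or, Q) \<in> (flip_rel n \<I>)\<^sup>*"

definition is_join :: "nat \<Rightarrow> nat set set \<Rightarrow> (nat set \<Rightarrow> nat) set \<Rightarrow> (nat set \<Rightarrow> nat) \<Rightarrow> bool" where
  "is_join n \<I> S B \<longleftrightarrow> B \<in> acyc_orients \<I> \<and> (\<forall>A\<in>S. P_le n \<I> A B) \<and>
     (\<forall>C\<in>acyc_orients \<I>. (\<forall>A\<in>S. P_le n \<I> A C) \<longrightarrow> P_le n \<I> B C)"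

end

theory Submission
  imports Defs
begin

(* The order of P_I has a local description: X is below Y iff X(J) <= Y(I) whenever X(J) is in I
   and Y(I) is in J (orient_le).  For X = Y this only excludes 2-cycles, and for intervals that
   already forces acyclicity, since in a longer cycle the edge with the largest orientation value
   can be cut out.  An increasing flip satisfies the description, and closure under intersection
   makes it transitive.  Conversely, if X is locally below C, flipping the largest value i on
   which X and C disagree to the largest value j that C takes on edges X orients to i yields an
   acyclic orientation that is locally below C and strictly closer to it.  Given the description,
   the orientation B(I) = min (I minus the segments [min J, A_p(J)[ with A_p(J) in I) is checked
   directly to be acyclic, above every A_p, and locally below every common upper bound. *)

definition orient_le :: "nat set set \<Rightarrow> (nat set \<Rightarrow> nat) \<Rightarrow> (nat set \<Rightarrow> nat) \<Rightarrow> bool" where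
  "orient_le \<I> X Y \<longleftrightarrow> (\<forall>I\<in>\<I>. \<forall>J\<in>\<I>. X J \<in> I \<longrightarrow> Y I \<in> J \<longrightarrow> X J \<le> Y I)"

lemma orientation_mem: "orientation \<I> X \<Longrightarrow> H \<in> \<I> \<Longrightarrow> X H \<in> H"
  unfolding orientation_def by blast

lemma orientation_undefined: "orientation \<I> X \<Longrightarrow> H \<notin> \<I> \<Longrightarrow> X H = 0"
  unfolding orientation_def by blast

lemma acyclic_orientation_imp_orientation: "acyclic_orientation \<I> X \<Longrightarrow> orientation \<I> X"
  by (simp add: acyclic_orientation_def)

lemma orient_leD:
  "orient_le \<I> X Y \<Longrightarrow> I \<in> \<I> \<Longrightarrow> J \<in> \<I> \<Longrightarrow> X J \<in> I \<Longrightarrow> Y I \<in> J \<Longrightarrow> X J \<le> Y I"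
  by (auto simp: orient_le_def)

lemma orient_le_self_if_acyclic:
  assumes "acyclic_orientation \<I> X"
  shows "orient_le \<I> X X"
  unfolding orient_le_def
proof (intro ballI impI, rule ccontr)
  fix I J assume IJ: "I \<in> \<I>" "J \<in> \<I>" "X J \<in> I" "X I \<in> J" "\<not> X J \<le> X I"
  let ?Hs = "[I, J]"
  have "length ?Hs \<ge> 2 \<and> set ?Hs \<subseteq> \<I> \<and>
     (\<forall>i. Suc i < length ?Hs \<longrightarrow> X (?Hs ! Suc i) \<in> ?Hs ! i - {X (?Hs ! i)}) \<and>
     X (?Hs ! 0) \<in> last ?Hs - {X (last ?Hs)}"
    using IJ by (auto simp: less_Suc_eq)
  then show False
    using assms unfolding acyclic_orientation_def by blast
qed

lemma orient_le_imp_le: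
  "orientation \<I> X \<Longrightarrow> orientation \<I> Y \<Longrightarrow> orient_le \<I> X Y \<Longrightarrow> H \<in> \<I> \<Longrightarrow> X H \<le> Y H"
  using orient_leD[of \<I> X Y H H] orientation_mem by metis

lemma orient_le_antisym:
  assumes "orientation \<I> X" "orientation \<I> Y" "orient_le \<I> X Y" "orient_le \<I> Y X"
  shows "X = Y"
proof
  fix H
  show "X H = Y H"
    using assms orient_le_imp_le[of \<I>] orientation_undefined[of \<I>]
    by (cases "H \<in> \<I>") (metis le_antisym, metis)
qed

lemma increasing_flip_imp_orient_le:
  assumes aX: "acyclic_orientation \<I> X" and aY: "acyclic_orientation \<I> Y"
    and flip: "increasing_flip n \<I> X Y"
  shows "orient_le \<I> X Y"
proof -
  obtain i j where "i < j" and changed: "\<forall>H\<in>\<I>. X H \<noteq> Y H \<longrightarrow> X H = i \<and> Y H = j"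
    using flip unfolding increasing_flip_def by blast
  show ?thesis
    unfolding orient_le_def
  proof (intro ballI impI)
    fix I J assume I: "I \<in> \<I>" and J: "J \<in> \<I>" and XJ: "X J \<in> I" and YI: "Y I \<in> J"
    show "X J \<le> Y I"
    proof (cases "Y I = X I")
      case True
      then show ?thesis
        using orient_leD[OF orient_le_self_if_acyclic[OF aX] I J] XJ YI by simp
    next
      case False
      then have "Y I = j"
        using changed I by auto
      show ?thesis
      proof (cases "X J = Y J")
        case True
        then show ?thesis
          using orient_leD[OF orient_le_self_if_acyclic[OF aY] I J] XJ YI by simp
      next
        case False
        then show ?thesis
          using changed J \<open>Y I = j\<close> \<open>i < j\<close> by auto
      qed
    qed
  qed
qed

definition cycle_arrow :: "(nat set \<Rightarrow> nat) \<Rightarrow> nat set \<Rightarrow> nat set \<Rightarrow> bool" where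
  "cycle_arrow X H K \<longleftrightarrow> X K \<in> H \<and> X K \<noteq> X H"

(* A cycle H_0, ..., H_(k-1) as in the definition of acyclicity, extended k-periodically to all
   indices so that it can be rotated and shortened freely. *)
definition periodic_cycle :: "nat set set \<Rightarrow> (nat set \<Rightarrow> nat) \<Rightarrow> (nat \<Rightarrow> nat set) \<Rightarrow> nat \<Rightarrow> bool" where
  "periodic_cycle \<I> X f k \<longleftrightarrow>
     (\<forall>i. f i \<in> \<I>) \<and> (\<forall>i. cycle_arrow X (f i) (f (Suc i))) \<and> (\<forall>i. f (i + k) = f i)"

locale interval_hgraph =
  fixes n :: nat and \<I> :: "nat set set"
  assumes interval_hypergraph: "interval_hypergraph n \<I>"
begin

lemma edge_interval:
  assumes "H \<in> \<I>"
  obtains a b where "1 \<le> a" "a \<le> b" "b \<le> n" "H = {a..b}"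
  using interval_hypergraph assms unfolding interval_hypergraph_def by blast

lemma edge_convex: "H \<in> \<I> \<Longrightarrow> x \<in> H \<Longrightarrow> z \<in> H \<Longrightarrow> x \<le> y \<Longrightarrow> y \<le> z \<Longrightarrow> y \<in> H"
  by (erule edge_interval) auto

lemma finite_edge: "H \<in> \<I> \<Longrightarrow> finite H"
  by (erule edge_interval) auto

lemma edge_nonempty: "H \<in> \<I> \<Longrightarrow> H \<noteq> {}"
  by (erule edge_interval) auto

lemma edge_subset: "H \<in> \<I> \<Longrightarrow> H \<subseteq> {1..n}"
  by (erule edge_interval) auto

lemma finite_edges: "finite \<I>"
  using edge_subset by (intro finite_subset[of \<I> "Pow {1..n}"]) auto

lemma cycle_arrow_shortcut:
  assumes oX: "orientation \<I> X" and X_le_X: "orient_le \<I> X X" and P: "P \<in> \<I>" and H: "H \<in> \<I>"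
    and PH: "cycle_arrow X P H" and HS: "cycle_arrow X H S"
    and less: "X P < X H" "X S < X H"
  shows "cycle_arrow X P S"
proof -
  have "X P \<notin> H"
    using orient_leD[OF X_le_X P H] PH less(1) by (auto simp: cycle_arrow_def)
  then have "X P < X S"
    using edge_convex[OF H, of "X S" "X H" "X P"] orientation_mem[OF oX H] HS less(1)
    unfolding cycle_arrow_def by (meson not_less order.strict_implies_order)
  moreover have "X S \<in> P"
    using edge_convex[OF P, of "X P" "X H" "X S"] orientation_mem[OF oX P] PH less(2) calculation
    by (auto simp: cycle_arrow_def)
  ultimately show ?thesis
    by (auto simp: cycle_arrow_def)
qed

lemma maximal_value_on_edges:
  fixes X :: "nat set \<Rightarrow> 'a::linorder"
  assumes "\<And>i. f i \<in> \<I>"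
  obtains m where "\<And>i. X (f i) \<le> X (f m)"
proof -
  let ?R = "range (\<lambda>i. X (f i))"
  have "?R \<subseteq> X ` \<I>"
    using assms by auto
  then have "finite ?R"
    using finite_edges finite_subset by blast
  moreover obtain m where "X (f m) = Max ?R"
    using Max_in[OF \<open>finite ?R\<close>] by auto
  ultimately show thesis
    by (intro that[of m]) simp
qed

lemma periodic_cycle_shorten:
  assumes oX: "orientation \<I> X" and X_le_X: "orient_le \<I> X X"
    and cycle: "periodic_cycle \<I> X f (Suc k)" and "0 < k"
  shows "\<exists>g. periodic_cycle \<I> X g k"
proof -
  have edges: "f i \<in> \<I>" and arrow: "cycle_arrow X (f i) (f (Suc i))"
    and period: "f (i + Suc k) = f i" for i
    using cycle by (auto simp: periodic_cycle_def)
  obtain m where max: "X (f i) \<le> X (f m)" for i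
    using maximal_value_on_edges[of f X] edges by blast
  have less: "X (f i) < X (f m)" if "cycle_arrow X (f i) (f m) \<or> cycle_arrow X (f m) (f i)" for i
    using that max[of i] by (auto simp: cycle_arrow_def)
  obtain k' where k': "k = Suc k'"
    using \<open>0 < k\<close> gr0_implies_Suc by blast
  \<comment> \<open>drop \<open>f m\<close>, whose value is maximal, and bridge the gap by a shortcut\<close>
  define g where "g i = f (Suc m + i mod k)" for i
  have "cycle_arrow X (g i) (g (Suc i))" for i
  proof (cases "Suc (i mod k) < k")
    case True
    then show ?thesis
      using arrow by (simp add: g_def mod_Suc)
  next
    case False
    then have last: "i mod k = k'"
      using mod_less_divisor[OF \<open>0 < k\<close>, of i] k' by linarith
    then have wrap: "Suc i mod k = 0"
      using k' by (simp add: mod_Suc)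
    have into_m: "cycle_arrow X (f (Suc m + k')) (f m)"
      using arrow[of "Suc m + k'"] period[of m] k' by (simp add: add.commute)
    show ?thesis
      using cycle_arrow_shortcut[OF oX X_le_X edges edges into_m arrow]
        less[of "Suc m + k'"] less[of "Suc m"] into_m arrow[of m]
      by (simp add: g_def last wrap)
  qed
  then have "periodic_cycle \<I> X g k"
    using edges by (simp add: periodic_cycle_def g_def)
  then show ?thesis by blast
qed

lemma no_periodic_cycle:
  assumes oX: "orientation \<I> X" and X_le_X: "orient_le \<I> X X"
  shows "periodic_cycle \<I> X f k \<Longrightarrow> 0 < k \<Longrightarrow> False"
proof (induction k arbitrary: f)
  case 0
  then show ?case by simp
next
  case (Suc k)
  show False
  proof (cases "k = 0")
    case True
    then have "cycle_arrow X (f 0) (f (Suc 0))" "f (0 + Suc 0) = f 0"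
      using Suc.prems(1) unfolding periodic_cycle_def by blast+
    then show False
      by (simp add: cycle_arrow_def)
  next
    case False
    then obtain g where "periodic_cycle \<I> X g k"
      using periodic_cycle_shorten[OF oX X_le_X Suc.prems(1)] by blast
    then show False
      using Suc.IH False by blast
  qed
qed

lemma acyclic_orientation_if_orient_le_self:
  assumes oX: "orientation \<I> X" and X_le_X: "orient_le \<I> X X"
  shows "acyclic_orientation \<I> X"
  unfolding acyclic_orientation_def
proof (intro conjI oX notI, elim exE conjE)
  fix Hs :: "nat set list"
  assume len: "2 \<le> length Hs" and edges: "set Hs \<subseteq> \<I>"
    and arrows: "\<forall>i. Suc i < length Hs \<longrightarrow> X (Hs ! Suc i) \<in> Hs ! i - {X (Hs ! i)}"
    and closing: "X (Hs ! 0) \<in> last Hs - {X (last Hs)}"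
  define k where "k = length Hs"
  have "0 < k"
    using len unfolding k_def by linarith
  then have "last Hs = Hs ! (k - 1)"
    by (simp add: k_def last_conv_nth)
  have "cycle_arrow X (Hs ! (i mod k)) (Hs ! (Suc i mod k))" for i
  proof (cases "Suc (i mod k) < k")
    case True
    then show ?thesis
      using arrows by (simp add: cycle_arrow_def mod_Suc k_def)
  next
    case False
    then have "i mod k = k - 1" "Suc i mod k = 0"
      using mod_less_divisor[OF \<open>0 < k\<close>, of i] by (auto simp: mod_Suc)
    then show ?thesis
      using closing \<open>last Hs = Hs ! (k - 1)\<close> by (simp add: cycle_arrow_def)
  qed
  then have "periodic_cycle \<I> X (\<lambda>i. Hs ! (i mod k)) k"
    using edges \<open>0 < k\<close> by (auto simp: periodic_cycle_def k_def)
  then show False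
    using no_periodic_cycle[OF oX X_le_X] \<open>0 < k\<close> by blast
qed

lemma acyclic_orientation_iff:
  "acyclic_orientation \<I> X \<longleftrightarrow> orientation \<I> X \<and> orient_le \<I> X X"
  using acyclic_orientation_if_orient_le_self orient_le_self_if_acyclic
    acyclic_orientation_imp_orientation by blast

end

definition flip_at :: "nat set set \<Rightarrow> (nat set \<Rightarrow> nat) \<Rightarrow> nat \<Rightarrow> nat \<Rightarrow> nat set \<Rightarrow> nat" where
  "flip_at \<I> X i j H = (if H \<in> \<I> \<and> i \<in> H \<and> j \<in> H \<and> X H = i then j else X H)"

lemma orientation_flip_at: "orientation \<I> X \<Longrightarrow> orientation \<I> (flip_at \<I> X i j)"
  by (auto simp: orientation_def flip_at_def)

locale flip_step = interval_hgraph +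
  fixes X C :: "nat set \<Rightarrow> nat" and i j :: nat and H0 :: "nat set"
  assumes oX: "orientation \<I> X" and oC: "orientation \<I> C"
    and X_le_X: "orient_le \<I> X X" and C_le_C: "orient_le \<I> C C" and X_le_C: "orient_le \<I> X C"
    and H0: "H0 \<in> \<I>" "X H0 = i" "C H0 = j" and i_less_j: "i < j"
    and i_max: "\<And>H. H \<in> \<I> \<Longrightarrow> X H \<noteq> C H \<Longrightarrow> X H \<le> i"
    and j_max: "\<And>H. H \<in> \<I> \<Longrightarrow> X H = i \<Longrightarrow> C H \<noteq> i \<Longrightarrow> C H \<le> j"
begin

lemma flip_edge_mem: "i \<in> H0" "j \<in> H0"
  using orientation_mem[OF oX H0(1)] orientation_mem[OF oC H0(1)] H0 by auto

lemma increasing_flip_flip_at: "increasing_flip n \<I> X (flip_at \<I> X i j)"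
proof -
  let ?Y = "flip_at \<I> X i j"
  have "1 \<le> i" "j \<le> n"
    using edge_subset[OF H0(1)] flip_edge_mem by auto
  have "X \<noteq> ?Y"
    using H0 flip_edge_mem i_less_j by (metis flip_at_def less_irrefl)
  moreover have "\<forall>H\<in>\<I>. X H \<noteq> ?Y H \<longrightarrow> X H = i \<and> ?Y H = j"
    by (simp add: flip_at_def)
  moreover have "X H \<noteq> j" if "H \<in> \<I>" "i \<in> H" for H
    using orient_leD[OF X_le_X H0(1) that(1)] H0 flip_edge_mem that i_less_j by fastforce
  then have "\<forall>H\<in>\<I>. {i, j} \<subseteq> H \<longrightarrow> (X H = i \<longleftrightarrow> ?Y H = j)"
    by (auto simp: flip_at_def)
  ultimately show ?thesis
    unfolding increasing_flip_def using \<open>1 \<le> i\<close> i_less_j \<open>j \<le> n\<close> by blast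
qed

lemma flip_at_distance_less: "(\<Sum>H\<in>\<I>. C H - flip_at \<I> X i j H) < (\<Sum>H\<in>\<I>. C H - X H)"
proof (rule sum_strict_mono_ex1[OF finite_edges])
  show "\<forall>H\<in>\<I>. C H - flip_at \<I> X i j H \<le> C H - X H"
    using i_less_j by (auto simp: flip_at_def)
  show "\<exists>H\<in>\<I>. C H - flip_at \<I> X i j H < C H - X H"
    using H0 flip_edge_mem i_less_j by (intro bexI[of _ H0]) (auto simp: flip_at_def)
qed

lemma orient_le_flip_at_target: "orient_le \<I> (flip_at \<I> X i j) C"
  unfolding orient_le_def
proof (intro ballI impI)
  fix I J assume I: "I \<in> \<I>" and J: "J \<in> \<I>"
    and XJ: "flip_at \<I> X i j J \<in> I" and CI: "C I \<in> J"
  show "flip_at \<I> X i j J \<le> C I"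
  proof (cases "i \<in> J \<and> j \<in> J \<and> X J = i")
    case False
    then show ?thesis
      using orient_leD[OF X_le_C I J] XJ CI J by (auto simp: flip_at_def)
  next
    case True
    then have "j \<in> I"
      using XJ J by (simp add: flip_at_def)
    have "i \<le> C I"
    proof (rule ccontr)
      assume "\<not> i \<le> C I"
      then have "i \<in> I"
        using edge_convex[OF I orientation_mem[OF oC I] \<open>j \<in> I\<close>] i_less_j by simp
      then show False
        using orient_leD[OF X_le_C I J] True CI \<open>\<not> i \<le> C I\<close> by simp
    qed
    have "j \<le> C I"
    proof (rule ccontr)
      assume "\<not> j \<le> C I"
      then have "C I \<in> H0"
        using edge_convex[OF H0(1) flip_edge_mem] \<open>i \<le> C I\<close> by simp
      then show False
        using orient_leD[OF C_le_C I H0(1)] H0 \<open>j \<in> I\<close> \<open>\<not> j \<le> C I\<close> by simp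
    qed
    then show ?thesis
      using True J by (simp add: flip_at_def)
  qed
qed

lemma flipped_le_unflipped:
  assumes I: "I \<in> \<I>" and J: "J \<in> \<I>" and "X J = i" "i \<in> J" "j \<in> J" "j \<in> I" "X I \<in> J"
    and unflipped: "flip_at \<I> X i j I = X I"
  shows "j \<le> X I"
proof (rule ccontr)
  assume "\<not> j \<le> X I"
  have "i \<notin> I"
  proof
    assume "i \<in> I"
    then have "X I = i"
      using orient_leD[OF X_le_X I J] orient_leD[OF X_le_X J I] assms by simp
    then show False
      using unflipped I \<open>i \<in> I\<close> \<open>j \<in> I\<close> i_less_j by (simp add: flip_at_def)
  qed
  then have "\<not> X I \<le> i"
    using edge_convex[OF I orientation_mem[OF oX I] \<open>j \<in> I\<close>, of i] i_less_j by auto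
  then have "X I = C I"
    using i_max[OF I] by auto
  moreover have "flip_at \<I> X i j J = j"
    using J assms by (simp add: flip_at_def)
  ultimately show False
    using orient_leD[OF orient_le_flip_at_target I J] assms \<open>\<not> j \<le> X I\<close> by simp
qed

lemma unflipped_le_flipped:
  assumes I: "I \<in> \<I>" and J: "J \<in> \<I>" and "X I = i" "j \<in> I" "j \<in> J" "X J \<in> I"
  shows "X J \<le> j"
proof -
  have "i \<le> C I"
    using orient_le_imp_le[OF oX oC X_le_C I] assms by simp
  moreover have "C I \<le> j"
    using j_max[OF I] assms i_less_j by (cases "C I = i") auto
  ultimately have "C I \<in> H0"
    using edge_convex[OF H0(1) flip_edge_mem] by simp
  then have "C I = j"
    using orient_leD[OF C_le_C I H0(1)] H0 assms \<open>C I \<le> j\<close> by simp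
  then show ?thesis
    using orient_leD[OF X_le_C I J] assms by simp
qed

lemma acyclic_flip_at: "acyclic_orientation \<I> (flip_at \<I> X i j)"
  unfolding acyclic_orientation_iff
proof (intro conjI orientation_flip_at[OF oX])
  let ?Y = "flip_at \<I> X i j"
  show "orient_le \<I> ?Y ?Y"
    unfolding orient_le_def
  proof (intro ballI impI)
    fix I J assume I: "I \<in> \<I>" and J: "J \<in> \<I>" and YJ: "?Y J \<in> I" and YI: "?Y I \<in> J"
    consider (neither) "?Y I = X I" "?Y J = X J"
      | (both) "?Y I = j" "?Y J = j"
      | (J_only) "?Y I = X I" "?Y J = j" "X J = i" "i \<in> J" "j \<in> J"
      | (I_only) "?Y I = j" "?Y J = X J" "X I = i" "j \<in> I"
      using I J YJ YI unfolding flip_at_def by (auto split: if_splits)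
    then show "?Y J \<le> ?Y I"
    proof cases
      case neither
      then show ?thesis
        using orient_leD[OF X_le_X I J] YJ YI by simp
    next
      case both
      then show ?thesis by simp
    next
      case J_only
      then show ?thesis
        using flipped_le_unflipped[OF I J] YJ YI by simp
    next
      case I_only
      then show ?thesis
        using unflipped_le_flipped[OF I J] YJ YI by simp
    qed
  qed
qed

end

context interval_hgraph
begin

lemma flip_edge_exists:
  assumes oX: "orientation \<I> X" and oC: "orientation \<I> C"
    and le: "\<And>H. H \<in> \<I> \<Longrightarrow> X H \<le> C H" and "X \<noteq> C"
  obtains H0 where "H0 \<in> \<I>" "X H0 < C H0"
    "\<And>H. H \<in> \<I> \<Longrightarrow> X H \<noteq> C H \<Longrightarrow> X H \<le> X H0"
    "\<And>H. H \<in> \<I> \<Longrightarrow> X H = X H0 \<Longrightarrow> C H \<noteq> X H0 \<Longrightarrow> C H \<le> C H0"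
proof -
  define D where "D = {H \<in> \<I>. X H \<noteq> C H}"
  have "D \<noteq> {}"
  proof
    assume "D = {}"
    then have "X H = C H" for H
      using orientation_undefined[OF oX] orientation_undefined[OF oC]
      by (cases "H \<in> \<I>") (auto simp: D_def)
    then show False
      using \<open>X \<noteq> C\<close> by auto
  qed
  have "finite D"
    using finite_edges by (simp add: D_def)
  define i where "i = Max (X ` D)"
  define E where "E = {H \<in> D. X H = i}"
  have "i \<in> X ` D"
    using Max_in[of "X ` D"] \<open>finite D\<close> \<open>D \<noteq> {}\<close> by (simp add: i_def)
  then have "E \<noteq> {}"
    by (auto simp: E_def)
  have "finite E"
    using \<open>finite D\<close> by (simp add: E_def)
  have "Max (C ` E) \<in> C ` E"
    using Max_in[of "C ` E"] \<open>finite E\<close> \<open>E \<noteq> {}\<close> by simp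
  then obtain H0 where H0: "H0 \<in> E" "C H0 = Max (C ` E)"
    by auto
  show thesis
  proof
    show "H0 \<in> \<I>" "X H0 < C H0"
      using H0 le[of H0] by (auto simp: E_def D_def)
    show "X H \<le> X H0" if "H \<in> \<I>" "X H \<noteq> C H" for H
      using that H0 \<open>finite D\<close> by (auto simp: i_def E_def D_def)
    show "C H \<le> C H0" if "H \<in> \<I>" "X H = X H0" "C H \<noteq> X H0" for H
      using that H0 \<open>finite E\<close> by (auto simp: E_def D_def)
  qed
qed

lemma exists_flip_towards:
  assumes aX: "acyclic_orientation \<I> X" and aC: "acyclic_orientation \<I> C"
    and X_le_C: "orient_le \<I> X C" and "X \<noteq> C"
  shows "\<exists>Y. (X, Y) \<in> flip_rel n \<I> \<and> orient_le \<I> Y C \<and>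
    (\<Sum>H\<in>\<I>. C H - Y H) < (\<Sum>H\<in>\<I>. C H - X H)"
proof -
  have oX: "orientation \<I> X" and oC: "orientation \<I> C"
    using aX aC by (simp_all add: acyclic_orientation_imp_orientation)
  obtain H0 where "H0 \<in> \<I>" "X H0 < C H0"
    and "\<And>H. H \<in> \<I> \<Longrightarrow> X H \<noteq> C H \<Longrightarrow> X H \<le> X H0"
    and "\<And>H. H \<in> \<I> \<Longrightarrow> X H = X H0 \<Longrightarrow> C H \<noteq> X H0 \<Longrightarrow> C H \<le> C H0"
    using flip_edge_exists[OF oX oC orient_le_imp_le[OF oX oC X_le_C] \<open>X \<noteq> C\<close>] by blast
  then interpret step: flip_step n \<I> X C "X H0" "C H0" H0
    using oX oC aX aC X_le_C by unfold_locales (simp_all add: orient_le_self_if_acyclic)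
  show ?thesis
    using aX step.acyclic_flip_at step.increasing_flip_flip_at step.orient_le_flip_at_target
      step.flip_at_distance_less
    by (auto simp: flip_rel_def acyc_orients_def)
qed

lemma flip_path_if_orient_le:
  assumes aC: "acyclic_orientation \<I> C"
  shows "acyclic_orientation \<I> X \<Longrightarrow> orient_le \<I> X C \<Longrightarrow> (X, C) \<in> (flip_rel n \<I>)\<^sup>*"
proof (induction "\<Sum>H\<in>\<I>. C H - X H" arbitrary: X rule: less_induct)
  case less
  show ?case
  proof (cases "X = C")
    case False
    then obtain Y where "(X, Y) \<in> flip_rel n \<I>" "orient_le \<I> Y C"
      and "(\<Sum>H\<in>\<I>. C H - Y H) < (\<Sum>H\<in>\<I>. C H - X H)"
      using exists_flip_towards[OF less.prems(1) aC less.prems(2)] by blast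
    moreover have "acyclic_orientation \<I> Y"
      using \<open>(X, Y) \<in> flip_rel n \<I>\<close> by (simp add: flip_rel_def acyc_orients_def)
    ultimately have "(Y, C) \<in> (flip_rel n \<I>)\<^sup>*"
      using less.hyps by blast
    then show ?thesis
      by (rule converse_rtrancl_into_rtrancl[OF \<open>(X, Y) \<in> flip_rel n \<I>\<close>])
  qed simp
qed

end

definition join_excluded :: "nat set set \<Rightarrow> (nat set \<Rightarrow> nat) set \<Rightarrow> nat set \<Rightarrow> nat set" where
  "join_excluded \<I> S H = (\<Union>X\<in>S. \<Union>J\<in>{J \<in> \<I>. X J \<in> H}. {Min J..<X J})"

definition join_orient :: "nat set set \<Rightarrow> (nat set \<Rightarrow> nat) set \<Rightarrow> nat set \<Rightarrow> nat" where
  "join_orient \<I> S H = (if H \<in> \<I> then Min (H - join_excluded \<I> S H) else 0)"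

lemma mem_join_excluded:
  "x \<in> join_excluded \<I> S H \<longleftrightarrow> (\<exists>X\<in>S. \<exists>J\<in>\<I>. X J \<in> H \<and> Min J \<le> x \<and> x < X J)"
  by (auto simp: join_excluded_def)

context interval_hgraph
begin

lemma join_orient_mem:
  assumes H: "H \<in> \<I>"
  shows "join_orient \<I> S H \<in> H - join_excluded \<I> S H"
proof -
  have "Max H \<notin> join_excluded \<I> S H"
    using Max_ge[OF finite_edge[OF H]] by (fastforce simp: mem_join_excluded)
  moreover have "Max H \<in> H"
    using finite_edge[OF H] edge_nonempty[OF H] by simp
  ultimately have "H - join_excluded \<I> S H \<noteq> {}"
    by blast
  then show ?thesis
    using H Min_in[of "H - join_excluded \<I> S H"] finite_edge[OF H] by (simp add: join_orient_def)
qed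

lemma join_orient_le:
  "H \<in> \<I> \<Longrightarrow> x \<in> H \<Longrightarrow> x \<notin> join_excluded \<I> S H \<Longrightarrow> join_orient \<I> S H \<le> x"
  using finite_edge by (simp add: join_orient_def)

lemma join_orient_ge:
  assumes "H \<in> \<I>" "X \<in> S" "K \<in> \<I>" "X K \<in> H" "Min K \<le> join_orient \<I> S H"
  shows "X K \<le> join_orient \<I> S H"
  using join_orient_mem[OF assms(1), of S] assms by (force simp: mem_join_excluded)

lemma orientation_join_orient: "orientation \<I> (join_orient \<I> S)"
  using join_orient_mem by (auto simp: orientation_def join_orient_def)

lemma join_orient_le_self: "orient_le \<I> (join_orient \<I> S) (join_orient \<I> S)"
  unfolding orient_le_def
proof (intro ballI impI, rule ccontr)
  let ?B = "join_orient \<I> S"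
  fix I J assume I: "I \<in> \<I>" and J: "J \<in> \<I>" and BJ: "?B J \<in> I" and BI: "?B I \<in> J"
    and "\<not> ?B J \<le> ?B I"
  then have "?B I \<in> join_excluded \<I> S J"
    using join_orient_le[OF J BI] by auto
  then obtain X K where K: "X \<in> S" "K \<in> \<I>" "X K \<in> J" "Min K \<le> ?B I" "?B I < X K"
    by (auto simp: mem_join_excluded)
  have "X K \<le> ?B J"
    using join_orient_ge[OF J K(1-3)] K(4) \<open>\<not> ?B J \<le> ?B I\<close> by simp
  moreover have "?B I \<in> I"
    using join_orient_mem[OF I] by blast
  ultimately have "X K \<in> I"
    using edge_convex[OF I _ BJ] K(5) by simp
  then show False
    using join_orient_ge[OF I K(1,2)] K(4,5) by simp
qed

lemma acyclic_join_orient: "acyclic_orientation \<I> (join_orient \<I> S)"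
  using acyclic_orientation_iff orientation_join_orient join_orient_le_self by blast

lemma orient_le_join_orient: "X \<in> S \<Longrightarrow> orient_le \<I> X (join_orient \<I> S)"
  unfolding orient_le_def
  using join_orient_ge finite_edge by simp

lemma join_orient_orient_le:
  assumes oC: "orientation \<I> C" and below: "\<And>X. X \<in> S \<Longrightarrow> orientation \<I> X \<and> orient_le \<I> X C"
  shows "orient_le \<I> (join_orient \<I> S) C"
  unfolding orient_le_def
proof (intro ballI impI, rule ccontr)
  let ?B = "join_orient \<I> S"
  fix I J assume I: "I \<in> \<I>" and J: "J \<in> \<I>" and BJ: "?B J \<in> I" and CI: "C I \<in> J"
    and "\<not> ?B J \<le> C I"
  then have "C I \<in> join_excluded \<I> S J"
    using join_orient_le[OF J CI] by auto
  then obtain X K where K: "X \<in> S" "K \<in> \<I>" "X K \<in> J" "Min K \<le> C I" "C I < X K"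
    by (auto simp: mem_join_excluded)
  have oX: "orientation \<I> X" and X_le_C: "orient_le \<I> X C"
    using below[OF K(1)] by auto
  have "X K \<le> ?B J"
    using join_orient_ge[OF J K(1-3)] K(4) \<open>\<not> ?B J \<le> C I\<close> by simp
  then have "X K \<in> I"
    using edge_convex[OF I orientation_mem[OF oC I] BJ] K(5) by simp
  moreover have "Min K \<in> K"
    using finite_edge[OF K(2)] edge_nonempty[OF K(2)] by simp
  then have "C I \<in> K"
    using edge_convex[OF K(2) _ orientation_mem[OF oX K(2)]] K(4,5) by simp
  ultimately show False
    using orient_leD[OF X_le_C I K(2)] K(5) by simp
qed

end

locale closed_interval_hgraph = interval_hgraph +
  assumes closed: "closed_under_intersection \<I>"
begin

lemma orient_le_trans:
  assumes oX: "orientation \<I> X" and oY: "orientation \<I> Y" and oZ: "orientation \<I> Z"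
    and X_le_Y: "orient_le \<I> X Y" and Y_le_Z: "orient_le \<I> Y Z"
  shows "orient_le \<I> X Z"
  unfolding orient_le_def
proof (intro ballI impI)
  fix I J assume I: "I \<in> \<I>" and J: "J \<in> \<I>" and XJ: "X J \<in> I" and ZI: "Z I \<in> J"
  have "X J \<in> J"
    using orientation_mem[OF oX J] .
  then have K: "I \<inter> J \<in> \<I>"
    using closed I J XJ unfolding closed_under_intersection_def by blast
  then have YK: "Y (I \<inter> J) \<in> I \<inter> J"
    using orientation_mem[OF oY] by blast
  have "X J \<le> Y (I \<inter> J)"
    using orient_leD[OF X_le_Y K J] XJ \<open>X J \<in> J\<close> YK by simp
  also have "\<dots> \<le> Z I"
    using orient_leD[OF Y_le_Z I K] YK ZI orientation_mem[OF oZ I] by simp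
  finally show "X J \<le> Z I" .
qed

lemma orient_le_if_P_le:
  assumes "P_le n \<I> X Y"
  shows "orient_le \<I> X Y"
proof -
  have aX: "acyclic_orientation \<I> X" and path: "(X, Y) \<in> (flip_rel n \<I>)\<^sup>*"
    using assms by (auto simp: P_le_def acyc_orients_def)
  from path show ?thesis
  proof (induction rule: rtrancl_induct)
    case base
    show ?case
      using orient_le_self_if_acyclic[OF aX] .
  next
    case (step Y Z)
    then have aY: "acyclic_orientation \<I> Y" and aZ: "acyclic_orientation \<I> Z"
      and "increasing_flip n \<I> Y Z"
      by (auto simp: flip_rel_def acyc_orients_def)
    then have "orient_le \<I> Y Z"
      by (rule increasing_flip_imp_orient_le)
    then show ?case
      using orient_le_trans step.IH aX aY aZ acyclic_orientation_imp_orientation by blast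
  qed
qed

theorem P_le_iff:
  "P_le n \<I> X Y \<longleftrightarrow> acyclic_orientation \<I> X \<and> acyclic_orientation \<I> Y \<and> orient_le \<I> X Y"
  using orient_le_if_P_le flip_path_if_orient_le by (auto simp: P_le_def acyc_orients_def)

lemma is_join_join_orient:
  assumes "S \<subseteq> acyc_orients \<I>"
  shows "is_join n \<I> S (join_orient \<I> S)"
  unfolding is_join_def
proof (intro conjI ballI impI)
  have acyclic_S: "acyclic_orientation \<I> X" if "X \<in> S" for X
    using assms that by (auto simp: acyc_orients_def)
  show "join_orient \<I> S \<in> acyc_orients \<I>"
    using acyclic_join_orient by (simp add: acyc_orients_def)
  show "P_le n \<I> X (join_orient \<I> S)" if "X \<in> S" for X
    using that acyclic_S acyclic_join_orient orient_le_join_orient by (simp add: P_le_iff)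
  fix C assume "C \<in> acyc_orients \<I>" and "\<forall>X\<in>S. P_le n \<I> X C"
  then show "P_le n \<I> (join_orient \<I> S) C"
    using acyclic_join_orient join_orient_orient_le acyclic_orientation_imp_orientation
    by (simp add: P_le_iff acyc_orients_def)
qed

lemma P_le_antisym: "P_le n \<I> X Y \<Longrightarrow> P_le n \<I> Y X \<Longrightarrow> X = Y"
  using orient_le_antisym[of \<I> X Y] acyclic_orientation_imp_orientation by (simp add: P_le_iff)

lemma is_join_unique:
  assumes "is_join n \<I> S B" and "is_join n \<I> S B'"
  shows "B = B'"
proof (rule P_le_antisym)
  show "P_le n \<I> B B'" "P_le n \<I> B' B"
    using assms unfolding is_join_def by blast+
qed

end

theorem proposition4p15:
  fixes n q :: nat and \<I> :: "nat set set" and A :: "nat \<Rightarrow> nat set \<Rightarrow> nat" and I :: "nat set"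
  assumes "interval_hypergraph n \<I>"
    and "closed_under_intersection \<I>"
    and "\<forall>p\<in>{1..q}. acyclic_orientation \<I> (A p)"
    and "I \<in> \<I>"
  shows "(\<exists>B. is_join n \<I> (A ` {1..q}) B) \<and>
         (\<forall>B. is_join n \<I> (A ` {1..q}) B \<longrightarrow>
            B I = Min (I - (\<Union>p\<in>{1..q}. \<Union>J\<in>{J\<in>\<I>. A p J \<in> I}. {Min J..<A p J})))"
proof -
  interpret closed_interval_hgraph n \<I>
    using assms(1,2) by unfold_locales
  have "A ` {1..q} \<subseteq> acyc_orients \<I>"
    using assms(3) by (auto simp: acyc_orients_def)
  then have join: "is_join n \<I> (A ` {1..q}) (join_orient \<I> (A ` {1..q}))"
    by (rule is_join_join_orient)
  have "join_orient \<I> (A ` {1..q}) I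
      = Min (I - (\<Union>p\<in>{1..q}. \<Union>J\<in>{J\<in>\<I>. A p J \<in> I}. {Min J..<A p J}))"
    using assms(4) by (simp add: join_orient_def join_excluded_def)
  then show ?thesis
    using join is_join_unique[OF _ join] by blast
qed

end
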